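(* Let $q$ be a prime power, let $p\ge2$ be an integer, and let $1\le d<p$. For every function $f:\mathbb{F}_q^n\to[0,\infty)$, $$\sum_{\substack{(v_1,\dots,v_p)\in(\mathbb{F}_q^n)^p\\ \mathrm{rank}[v_1,\dots,v_p]=d}}\ \prod_{j=1}^pf(v_j)\le\binom{p}{d}\sum_{m=0}^{p-d}\binom{p-d}{m}(q^d-1)^{p-d-m}q^{nd}\,f(0)^m\,\|f\|_1^{d-1}\,\|f\|_{p-d-m+1}^{p-d-m+1}.$$
   Context: The sum is over ordered $p$-tuples whose linear span has dimension exactly $d$ ($[v_1,\dots,v_p]$ is the $n\times p$ matrix with these columns). For $f:\mathbb{F}_q^n\to\mathbb{R}$ and $r\in(0,\infty)$, $\|f\|_r=\big(q^{-n}\sum_{x\in\mathbb{F}_q^n}|f(x)|^r\big)^{1/r}$. *)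

theory Defs
  imports "HOL-Analysis.Analysis" "HOL-Library.FuncSet"
begin

definition lrnorm :: "('a::{finite,field} ^ 'n \<Rightarrow> real) \<Rightarrow> real \<Rightarrow> real" where
  "lrnorm f r = (inverse (real CARD('a) ^ CARD('n)) * (\<Sum>x\<in>UNIV. \<bar>f x\<bar> powr r)) powr (1 / r)"

definition tuple_rank :: "nat \<Rightarrow> (nat \<Rightarrow> 'a::field ^ 'n) \<Rightarrow> nat" where
  "tuple_rank p v = vec.dim (v ` {..<p})"

end

theory Submission
  imports Defs
begin

text \<open>
  A tuple of rank \<open>d\<close> has \<open>d\<close> columns, indexed by some \<open>S\<close> with \<open>|S| = d\<close>, whose span contains
  all the other columns; this gives the factor \<open>p choose d\<close>. For fixed \<open>S\<close> the columns \<open>u\<close> indexed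
  by \<open>S\<close> are free and each of the remaining \<open>p - d\<close> columns ranges over \<open>span u\<close>, whose
  \<open>f\<close>-mass is at most \<open>f 0 + \<Sum>\<^sub>c f (\<Sum>\<^sub>i c\<^sub>i u\<^sub>i)\<close>, the sum running over the \<open>q\<^sup>d - 1\<close> nonzero
  coefficient vectors \<open>c\<close>. After the binomial expansion, the power-mean inequality moves the
  power inside that sum, and for a single \<open>c\<close> with \<open>c\<^sub>i \<noteq> 0\<close> the substitution
  \<open>u\<^sub>i \<mapsto> c\<^sub>i u\<^sub>i + \<dots>\<close> together with Young's inequality \<open>a b\<^sup>r \<le> (a\<^bsup>r+1\<^esup> + r b\<^bsup>r+1\<^esup>)/(r+1)\<close> gives
  \<open>\<Sum>\<^sub>u \<Prod>\<^sub>i f(u\<^sub>i) f(\<Sum>\<^sub>i c\<^sub>i u\<^sub>i)\<^sup>r \<le> (\<Sum> f)\<^bsup>d-1\<^esup> \<Sum> f\<^bsup>r+1\<^esup>\<close>.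
\<close>

lemma sum_power_le_card_power_mult_sum_power:
  fixes x :: "'b \<Rightarrow> real"
  assumes "finite I" and "\<And>i. i \<in> I \<Longrightarrow> x i \<ge> 0" and "r \<ge> 1"
  shows "(\<Sum>i\<in>I. x i) ^ r \<le> real (card I) ^ (r - 1) * (\<Sum>i\<in>I. x i ^ r)"
proof (cases "I = {}")
  case True
  then show ?thesis using assms by (simp add: power_0_left)
next
  case False
  define N where "N = real (card I)"
  have "N > 0" using False assms by (simp add: N_def card_gt_0_iff)
  have convex: "convex_on {0..} (\<lambda>t::real. t ^ r)"
    using convex_power_even convex_power_odd convex_on_subset by (cases "even r") blast+
  have "(\<Sum>i\<in>I. (1 / N) *\<^sub>R x i) ^ r \<le> (\<Sum>i\<in>I. (1 / N) * x i ^ r)"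
    using convex_on_sum[OF assms(1) False convex, of "\<lambda>_. 1 / N" x] \<open>N > 0\<close> assms(2)
    by (simp add: N_def)
  then have "((\<Sum>i\<in>I. x i) / N) ^ r \<le> (\<Sum>i\<in>I. x i ^ r) / N"
    by (simp add: sum_divide_distrib[symmetric] sum_distrib_left[symmetric])
  then have "(\<Sum>i\<in>I. x i) ^ r \<le> N ^ r * ((\<Sum>i\<in>I. x i ^ r) / N)"
    using \<open>N > 0\<close> by (simp add: power_divide field_simps)
  also have "\<dots> = N ^ (r - 1) * (\<Sum>i\<in>I. x i ^ r)"
    using \<open>N > 0\<close> assms(3) by (simp add: field_simps power_eq_if)
  finally show ?thesis by (simp add: N_def)
qed

lemma Youngs_inequality_nat:
  fixes a b :: real
  assumes "a \<ge> 0" and "b \<ge> 0"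
  shows "a * b ^ r \<le> (a ^ (r + 1) + r * b ^ (r + 1)) / (real r + 1)"
proof (cases "r = 0 \<or> a = 0 \<or> b = 0")
  case True
  then show ?thesis using assms by (auto simp: zero_le_mult_iff power_0_left)
next
  case False
  then have "a > 0" "b > 0" "r > 0" using assms by auto
  have "a * b ^ r \<le> a powr (r + 1) / (r + 1) + (b ^ r) powr ((r + 1) / r) / ((r + 1) / r)"
    by (rule Youngs_inequality) (use \<open>r > 0\<close> assms in \<open>auto simp: field_simps\<close>)
  also have "(b ^ r) powr ((r + 1) / r) = b ^ (r + 1)"
    using \<open>b > 0\<close> \<open>r > 0\<close> powr_realpow[of b "r + 1"]
    by (simp add: powr_realpow[symmetric] powr_powr)
  also have "a powr (r + 1) = a ^ (r + 1)"
    using \<open>a > 0\<close> powr_realpow[of a "r + 1"] by simp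
  also have "a ^ (r + 1) / (r + 1) + b ^ (r + 1) / ((r + 1) / r)
      = (a ^ (r + 1) + r * b ^ (r + 1)) / (real r + 1)"
    by (subst divide_divide_eq_right) (simp add: add_divide_distrib mult.commute add.commute)
  finally show ?thesis .
qed

lemma sum_UNIV_affine_reindex:
  fixes h :: "'a::field ^ 'n \<Rightarrow> 'b::comm_monoid_add"
  assumes "a \<noteq> 0"
  shows "(\<Sum>y\<in>UNIV. h (a *s y + L)) = (\<Sum>y\<in>UNIV. h y)"
  by (rule sum.reindex_bij_witness[where i = "\<lambda>y. inverse a *s (y - L)" and j = "\<lambda>y. a *s y + L"])
     (use assms in \<open>auto simp: vector_smult_assoc\<close>)

lemma sum_mult_power_affine_le:
  fixes f :: "'a::field ^ 'n \<Rightarrow> real"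
  assumes "a \<noteq> 0" and "\<And>x. f x \<ge> 0"
  shows "(\<Sum>y\<in>UNIV. f y * f (a *s y + L) ^ r) \<le> (\<Sum>x\<in>UNIV. f x ^ (r + 1))"
proof -
  have "(\<Sum>y\<in>UNIV. f y * f (a *s y + L) ^ r)
      \<le> (\<Sum>y\<in>UNIV. (f y ^ (r + 1) + r * f (a *s y + L) ^ (r + 1)) / (real r + 1))"
    by (intro sum_mono Youngs_inequality_nat assms(2))
  also have "\<dots> = ((\<Sum>y\<in>UNIV. f y ^ (r + 1)) + r * (\<Sum>y\<in>UNIV. f (a *s y + L) ^ (r + 1))) / (real r + 1)"
    by (simp add: sum_divide_distrib[symmetric] sum.distrib sum_distrib_left)
  also have "\<dots> = (\<Sum>x\<in>UNIV. f x ^ (r + 1))"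
    using sum_UNIV_affine_reindex[OF assms(1), of "\<lambda>y. f y ^ (r + 1)"] by (simp add: field_simps)
  finally show ?thesis .
qed

lemma sum_PiE_insert:
  assumes "i \<notin> S"
  shows "(\<Sum>g\<in>PiE (insert i S) B. h g) = (\<Sum>y\<in>B i. \<Sum>g\<in>PiE S B. h (g(i := y)))"
  using sum.reindex[OF inj_combinator[OF assms, of B], of h]
  by (simp add: PiE_insert_eq sum.cartesian_product case_prod_unfold o_def)

lemma sum_PiE_prod_eq_power_sum:
  fixes f :: "'b \<Rightarrow> 'c::comm_semiring_1"
  assumes "finite T" and "finite B"
  shows "(\<Sum>z\<in>PiE T (\<lambda>_. B). \<Prod>j\<in>T. f (z j)) = (\<Sum>w\<in>B. f w) ^ card T"
  using prod_sum_PiE[OF assms(1), of "\<lambda>_. B" "\<lambda>_. f"] assms by simp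

lemma sum_PiE_prod_mult_power_lincomb_le:
  fixes f :: "'a::{finite,field} ^ 'n \<Rightarrow> real"
  assumes f: "\<And>x. f x \<ge> 0" and "finite S" and "i \<in> S" and "c i \<noteq> 0"
  shows "(\<Sum>u\<in>PiE S (\<lambda>_. UNIV). (\<Prod>j\<in>S. f (u j)) * f (\<Sum>j\<in>S. c j *s u j) ^ r)
     \<le> (\<Sum>x\<in>UNIV. f x) ^ (card S - 1) * (\<Sum>x\<in>UNIV. f x ^ (r + 1))"
proof -
  define T where "T = S - {i}"
  have S: "S = insert i T" and "i \<notin> T" and "finite T"
    using assms by (auto simp: T_def)
  have upd: "(\<Prod>j\<in>T. f ((g(i := y)) j)) = (\<Prod>j\<in>T. f (g j))"
    "(\<Sum>j\<in>T. c j *s (g(i := y)) j) = (\<Sum>j\<in>T. c j *s g j)" for g y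
    using \<open>i \<notin> T\<close> by (auto intro!: prod.cong sum.cong)
  have "(\<Sum>u\<in>PiE S (\<lambda>_. UNIV). (\<Prod>j\<in>S. f (u j)) * f (\<Sum>j\<in>S. c j *s u j) ^ r)
      = (\<Sum>g\<in>PiE T (\<lambda>_. UNIV). (\<Prod>j\<in>T. f (g j)) *
           (\<Sum>y\<in>UNIV. f y * f (c i *s y + (\<Sum>j\<in>T. c j *s g j)) ^ r))"
    unfolding S sum_PiE_insert[OF \<open>i \<notin> T\<close>] using \<open>i \<notin> T\<close> \<open>finite T\<close>
    by (subst sum.swap) (simp add: upd sum_distrib_left mult_ac fun_upd_same del: fun_upd_apply)
  also have "\<dots> \<le> (\<Sum>g\<in>PiE T (\<lambda>_. UNIV). (\<Prod>j\<in>T. f (g j)) * (\<Sum>x\<in>UNIV. f x ^ (r + 1)))"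
    by (intro sum_mono mult_left_mono prod_nonneg sum_mult_power_affine_le) (use assms in auto)
  also have "\<dots> = (\<Sum>x\<in>UNIV. f x) ^ (card S - 1) * (\<Sum>x\<in>UNIV. f x ^ (r + 1))"
    using \<open>finite T\<close> assms(3)
    by (simp add: T_def sum_distrib_right[symmetric] sum_PiE_prod_eq_power_sum)
  finally show ?thesis .
qed

definition nonzero_coeffs :: "'i set \<Rightarrow> ('i \<Rightarrow> 'a::zero) set" where
  "nonzero_coeffs S = {c \<in> PiE S (\<lambda>_. UNIV). \<exists>i\<in>S. c i \<noteq> 0}"

lemma finite_nonzero_coeffs:
  "finite S \<Longrightarrow> finite (nonzero_coeffs S :: ('i \<Rightarrow> 'a::{finite,zero}) set)"
  unfolding nonzero_coeffs_def by (rule finite_subset[OF _ finite_PiE]) auto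

lemma card_nonzero_coeffs:
  assumes "finite S"
  shows "card (nonzero_coeffs S :: ('i \<Rightarrow> 'a::{finite,zero}) set) = CARD('a) ^ card S - 1"
proof -
  have "nonzero_coeffs S = PiE S (\<lambda>_. UNIV :: 'a set) - {restrict (\<lambda>_. 0) S}"
    by (auto simp: nonzero_coeffs_def PiE_def extensional_def fun_eq_iff)
  then show ?thesis
    using assms by (simp add: card_Diff_singleton card_PiE)
qed

lemma span_image_subset_range_lincomb:
  fixes u :: "'i \<Rightarrow> 'a::field ^ 'n"
  assumes "finite S"
  shows "vec.span (u ` S) \<subseteq> range (\<lambda>c. \<Sum>i\<in>S. c i *s u i)"
proof (rule vec.span_minimal)
  show "u ` S \<subseteq> range (\<lambda>c. \<Sum>i\<in>S. c i *s u i)"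
  proof
    fix x assume "x \<in> u ` S"
    then obtain i where "i \<in> S" "x = u i" by auto
    then have "x = (\<Sum>j\<in>S. (if j = i then 1 else 0) *s u j)"
      using assms by (simp add: if_distrib[of "\<lambda>t. t *s _"] cong: if_cong)
    then show "x \<in> range (\<lambda>c. \<Sum>i\<in>S. c i *s u i)"
      by (rule range_eqI[where x = "\<lambda>j. if j = i then 1 else 0"])
  qed
  show "vec.subspace (range (\<lambda>c. \<Sum>i\<in>S. c i *s u i))"
    unfolding vec.subspace_def
  proof (intro conjI ballI allI)
    show "0 \<in> range (\<lambda>c. \<Sum>i\<in>S. c i *s u i)"
      by (rule range_eqI[where x = "\<lambda>_. 0"]) simp
    fix x y k
    assume "x \<in> range (\<lambda>c. \<Sum>i\<in>S. c i *s u i)" "y \<in> range (\<lambda>c. \<Sum>i\<in>S. c i *s u i)"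
    then obtain cx cy where x: "x = (\<Sum>i\<in>S. cx i *s u i)" and y: "y = (\<Sum>i\<in>S. cy i *s u i)"
      by auto
    have "x + y = (\<Sum>i\<in>S. (cx i + cy i) *s u i)"
      by (simp add: x y vector_sadd_rdistrib sum.distrib)
    then show "x + y \<in> range (\<lambda>c. \<Sum>i\<in>S. c i *s u i)"
      by (intro range_eqI)
    have "k *s x = (\<Sum>i\<in>S. (k * cx i) *s u i)"
      by (simp add: x vec.scale_sum_right vector_smult_assoc)
    then show "k *s x \<in> range (\<lambda>c. \<Sum>i\<in>S. c i *s u i)"
      by (intro range_eqI)
  qed
qed

lemma sum_span_le_sum_nonzero_lincomb:
  fixes f :: "'a::{finite,field} ^ 'n \<Rightarrow> real" and S :: "'i set"
  assumes f: "\<And>x. f x \<ge> 0" and "finite S"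
  shows "(\<Sum>w\<in>vec.span (u ` S). f w) \<le> f 0 + (\<Sum>c\<in>nonzero_coeffs S. f (\<Sum>i\<in>S. c i *s u i))"
proof -
  let ?lincomb = "\<lambda>c. \<Sum>i\<in>S. c i *s u i"
  have "vec.span (u ` S) - {0} \<subseteq> ?lincomb ` nonzero_coeffs S"
  proof
    fix w assume w: "w \<in> vec.span (u ` S) - {0}"
    then obtain c where c: "w = ?lincomb c"
      using span_image_subset_range_lincomb[OF \<open>finite S\<close>, of u] by auto
    then have "?lincomb (restrict c S) = w" and "\<exists>i\<in>S. c i \<noteq> 0"
      using w by (auto intro: sum.neutral)
    then show "w \<in> ?lincomb ` nonzero_coeffs S"
      unfolding nonzero_coeffs_def by (intro image_eqI[of _ _ "restrict c S"]) auto
  qed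
  then have "(\<Sum>w\<in>vec.span (u ` S) - {0}. f w) \<le> (\<Sum>w\<in>?lincomb ` nonzero_coeffs S. f w)"
    by (intro sum_mono2) (auto simp: f)
  also have "\<dots> \<le> (\<Sum>c\<in>nonzero_coeffs S. f (?lincomb c))"
    using sum_image_le[OF finite_nonzero_coeffs[OF \<open>finite S\<close>], of f ?lincomb] by (simp add: f o_def)
  finally show ?thesis
    by (simp add: sum.remove[OF finite vec.span_zero])
qed

lemma sum_PiE_prod_mult_power_sum_nonzero_lincomb_le:
  fixes f :: "'a::{finite,field} ^ 'n \<Rightarrow> real" and S :: "'i set"
  assumes f: "\<And>x. f x \<ge> 0" and "finite S" and "S \<noteq> {}"
  shows "(\<Sum>u\<in>PiE S (\<lambda>_. UNIV). (\<Prod>i\<in>S. f (u i)) * (\<Sum>c\<in>nonzero_coeffs S. f (\<Sum>i\<in>S. c i *s u i)) ^ r)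
    \<le> (real CARD('a) ^ card S - 1) ^ r * (\<Sum>x\<in>UNIV. f x) ^ (card S - 1) * (\<Sum>x\<in>UNIV. f x ^ (r + 1))"
proof (cases "r = 0")
  case True
  have "(\<Sum>u\<in>PiE S (\<lambda>_. UNIV). \<Prod>i\<in>S. f (u i)) = (\<Sum>x\<in>UNIV. f x) ^ card S"
    using \<open>finite S\<close> by (simp add: sum_PiE_prod_eq_power_sum)
  then show ?thesis
    using True assms by (simp add: power_eq_if card_gt_0_iff)
next
  case False
  define N where "N = real CARD('a) ^ card S - 1"
  have N: "real (card (nonzero_coeffs S :: ('i \<Rightarrow> 'a) set)) = N"
    using \<open>finite S\<close> by (simp add: card_nonzero_coeffs N_def of_nat_diff Suc_leI)
  have "N \<ge> 0" using N by (metis of_nat_0_le_iff)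
  have "(\<Sum>u\<in>PiE S (\<lambda>_. UNIV). (\<Prod>i\<in>S. f (u i)) * (\<Sum>c\<in>nonzero_coeffs S. f (\<Sum>i\<in>S. c i *s u i)) ^ r)
      \<le> (\<Sum>u\<in>PiE S (\<lambda>_. UNIV). (\<Prod>i\<in>S. f (u i)) * (N ^ (r - 1) * (\<Sum>c\<in>nonzero_coeffs S. f (\<Sum>i\<in>S. c i *s u i) ^ r)))"
    unfolding N[symmetric] using False \<open>finite S\<close>
    by (intro sum_mono mult_left_mono prod_nonneg sum_power_le_card_power_mult_sum_power)
       (auto simp: f finite_nonzero_coeffs)
  also have "\<dots> = N ^ (r - 1) * (\<Sum>c\<in>nonzero_coeffs S. \<Sum>u\<in>PiE S (\<lambda>_. UNIV). (\<Prod>i\<in>S. f (u i)) * f (\<Sum>i\<in>S. c i *s u i) ^ r)"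
    by (simp add: sum_distrib_left sum.swap[of _ "nonzero_coeffs S"] mult_ac)
  also have "\<dots> \<le> N ^ (r - 1) * (\<Sum>c\<in>(nonzero_coeffs S :: ('i \<Rightarrow> 'a) set). (\<Sum>x\<in>UNIV. f x) ^ (card S - 1) * (\<Sum>x\<in>UNIV. f x ^ (r + 1)))"
  proof (intro mult_left_mono sum_mono)
    fix c :: "'i \<Rightarrow> 'a" assume "c \<in> nonzero_coeffs S"
    then obtain i where "i \<in> S" "c i \<noteq> 0" by (auto simp: nonzero_coeffs_def)
    from sum_PiE_prod_mult_power_lincomb_le[where c = c, OF f \<open>finite S\<close> this]
    show "(\<Sum>u\<in>PiE S (\<lambda>_. UNIV). (\<Prod>i\<in>S. f (u i)) * f (\<Sum>i\<in>S. c i *s u i) ^ r)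
        \<le> (\<Sum>x\<in>UNIV. f x) ^ (card S - 1) * (\<Sum>x\<in>UNIV. f x ^ (r + 1))" .
  qed (use \<open>N \<ge> 0\<close> in simp)
  also have "\<dots> = N ^ r * (\<Sum>x\<in>UNIV. f x) ^ (card S - 1) * (\<Sum>x\<in>UNIV. f x ^ (r + 1))"
    using N False by (simp add: power_eq_if)
  finally show ?thesis unfolding N_def .
qed

lemma sum_PiE_prod_mult_sum_span_power_le:
  fixes f :: "'a::{finite,field} ^ 'n \<Rightarrow> real" and S :: "'i set"
  assumes f: "\<And>x. f x \<ge> 0" and "finite S" and "S \<noteq> {}"
  shows "(\<Sum>u\<in>PiE S (\<lambda>_. UNIV). (\<Prod>i\<in>S. f (u i)) * (\<Sum>w\<in>vec.span (u ` S). f w) ^ k)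
   \<le> (\<Sum>m=0..k. real (k choose m) * (real CARD('a) ^ card S - 1) ^ (k - m) * f 0 ^ m
         * ((\<Sum>x\<in>UNIV. f x) ^ (card S - 1) * (\<Sum>x\<in>UNIV. f x ^ (k - m + 1))))"
proof -
  define P where "P u = (\<Prod>i\<in>S. f (u i))" for u :: "'i \<Rightarrow> 'a ^ 'n"
  define X where "X u = (\<Sum>c\<in>nonzero_coeffs S. f (\<Sum>i\<in>S. c i *s u i))" for u :: "'i \<Rightarrow> 'a ^ 'n"
  have "(\<Sum>u\<in>PiE S (\<lambda>_. UNIV). P u * (\<Sum>w\<in>vec.span (u ` S). f w) ^ k)
      \<le> (\<Sum>u\<in>PiE S (\<lambda>_. UNIV). P u * (f 0 + X u) ^ k)"
    unfolding P_def X_def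
    by (intro sum_mono mult_left_mono power_mono sum_span_le_sum_nonzero_lincomb prod_nonneg sum_nonneg)
       (use assms in auto)
  also have "\<dots> = (\<Sum>m\<le>k. real (k choose m) * f 0 ^ m * (\<Sum>u\<in>PiE S (\<lambda>_. UNIV). P u * X u ^ (k - m)))"
    by (simp add: binomial_ring sum_distrib_left sum.swap[of _ "{..k}"] mult_ac)
  also have "\<dots> \<le> (\<Sum>m\<le>k. real (k choose m) * f 0 ^ m * ((real CARD('a) ^ card S - 1) ^ (k - m)
       * (\<Sum>x\<in>UNIV. f x) ^ (card S - 1) * (\<Sum>x\<in>UNIV. f x ^ (k - m + 1))))"
    unfolding P_def X_def
    by (intro sum_mono mult_left_mono sum_PiE_prod_mult_power_sum_nonzero_lincomb_le) (use assms in auto)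
  finally show ?thesis
    by (simp add: P_def atLeast0AtMost mult_ac)
qed

lemma PiE_columns_in_span_subset_image_merge:
  fixes S I :: "'i set"
  assumes "S \<subseteq> I"
  shows "{v \<in> PiE I (\<lambda>_. UNIV). \<forall>j\<in>I. v j \<in> vec.span (v ` S)}
    \<subseteq> (\<lambda>(u, z) j. if j \<in> S then u j else z j) `
        (SIGMA u:PiE S (\<lambda>_. UNIV). PiE (I - S) (\<lambda>_. vec.span (u ` S :: ('a::field ^ 'n) set)))"
proof
  fix v :: "'i \<Rightarrow> 'a ^ 'n"
  assume v: "v \<in> {v \<in> PiE I (\<lambda>_. UNIV). \<forall>j\<in>I. v j \<in> vec.span (v ` S)}"
  have "restrict v S ` S = v ` S" by auto
  with v have "(restrict v S, restrict v (I - S)) \<in> (SIGMA u:PiE S (\<lambda>_. UNIV). PiE (I - S) (\<lambda>_. vec.span (u ` S)))"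
    by auto
  moreover have "v = (\<lambda>(u, z) j. if j \<in> S then u j else z j) (restrict v S, restrict v (I - S))"
    using v \<open>S \<subseteq> I\<close> by (auto simp: PiE_def extensional_def fun_eq_iff)
  ultimately show "v \<in> (\<lambda>(u, z) j. if j \<in> S then u j else z j) `
      (SIGMA u:PiE S (\<lambda>_. UNIV). PiE (I - S) (\<lambda>_. vec.span (u ` S)))"
    by (rule rev_image_eqI)
qed

lemma sum_PiE_columns_in_span_le:
  fixes f :: "'a::{finite,field} ^ 'n \<Rightarrow> real" and S I :: "'i set"
  assumes f: "\<And>x. f x \<ge> 0" and "finite I" and "S \<subseteq> I"
  shows "(\<Sum>v\<in>{v \<in> PiE I (\<lambda>_. UNIV). \<forall>j\<in>I. v j \<in> vec.span (v ` S)}. \<Prod>j\<in>I. f (v j))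
    \<le> (\<Sum>u\<in>PiE S (\<lambda>_. UNIV). (\<Prod>i\<in>S. f (u i)) * (\<Sum>w\<in>vec.span (u ` S). f w) ^ (card I - card S))"
proof -
  define T where "T = I - S"
  define merge :: "('i \<Rightarrow> 'a ^ 'n) \<times> ('i \<Rightarrow> 'a ^ 'n) \<Rightarrow> 'i \<Rightarrow> 'a ^ 'n"
    where "merge = (\<lambda>(u, z) j. if j \<in> S then u j else z j)"
  define M :: "(('i \<Rightarrow> 'a ^ 'n) \<times> ('i \<Rightarrow> 'a ^ 'n)) set"
    where "M = (SIGMA u:PiE S (\<lambda>_. UNIV). PiE T (\<lambda>_. vec.span (u ` S)))"
  have "finite S" "finite T"
    using assms finite_subset by (auto simp: T_def)
  have finite_vectors: "finite X" for X :: "('a ^ 'n) set"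
    by (rule finite_subset[OF subset_UNIV]) simp
  have "finite M"
    unfolding M_def using \<open>finite S\<close> \<open>finite T\<close>
    by (intro finite_SigmaI finite_PiE) (auto simp: finite_vectors)
  have prod_merge: "(\<Prod>j\<in>I. f (merge (u, z) j)) = (\<Prod>i\<in>S. f (u i)) * (\<Prod>j\<in>T. f (z j))" for u z
  proof -
    have "I = S \<union> T" "S \<inter> T = {}" using \<open>S \<subseteq> I\<close> by (auto simp: T_def)
    then show ?thesis
      using \<open>finite S\<close> \<open>finite T\<close>
      by (simp add: prod.union_disjoint) (auto simp: merge_def T_def intro!: prod.cong arg_cong2[where f = times])
  qed
  have "(\<Sum>v\<in>{v \<in> PiE I (\<lambda>_. UNIV). \<forall>j\<in>I. v j \<in> vec.span (v ` S)}. \<Prod>j\<in>I. f (v j))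
      \<le> (\<Sum>v\<in>merge ` M. \<Prod>j\<in>I. f (v j))"
    using \<open>finite M\<close> PiE_columns_in_span_subset_image_merge[OF \<open>S \<subseteq> I\<close>]
    by (intro sum_mono2) (auto simp: f prod_nonneg merge_def M_def T_def)
  also have "\<dots> \<le> (\<Sum>x\<in>M. \<Prod>j\<in>I. f (merge x j))"
    using sum_image_le[OF \<open>finite M\<close>, of "\<lambda>v. \<Prod>j\<in>I. f (v j)" merge] by (simp add: f prod_nonneg o_def)
  also have "\<dots> = (\<Sum>u\<in>PiE S (\<lambda>_. UNIV). \<Sum>z\<in>PiE T (\<lambda>_. vec.span (u ` S)). \<Prod>j\<in>I. f (merge (u, z) j))"
    unfolding M_def using \<open>finite S\<close> \<open>finite T\<close>
    by (subst sum.Sigma) (auto intro!: finite_PiE simp: finite_vectors)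
  also have "\<dots> = (\<Sum>u\<in>PiE S (\<lambda>_. UNIV). (\<Prod>i\<in>S. f (u i)) * (\<Sum>w\<in>vec.span (u ` S). f w) ^ (card I - card S))"
    using \<open>finite S\<close> \<open>finite T\<close> \<open>S \<subseteq> I\<close>
    by (simp add: prod_merge sum_distrib_left[symmetric] sum_PiE_prod_eq_power_sum finite_vectors
        T_def card_Diff_subset)
  finally show ?thesis .
qed

lemma tuple_rank_obtains_spanning_columns:
  fixes v :: "nat \<Rightarrow> 'a::field ^ 'n"
  assumes "tuple_rank p v = d"
  obtains S where "S \<subseteq> {..<p}" and "card S = d" and "\<forall>j\<in>{..<p}. v j \<in> vec.span (v ` S)"
proof -
  obtain B where B: "B \<subseteq> v ` {..<p}" "v ` {..<p} \<subseteq> vec.span B" "card B = vec.dim (v ` {..<p})"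
    using vec.basis_exists by metis
  define S where "S = inv_into {..<p} v ` B"
  have "inv_into {..<p} v x \<in> {..<p}" if "x \<in> B" for x
    using that B(1) by (intro inv_into_into) auto
  then have "S \<subseteq> {..<p}"
    by (auto simp: S_def)
  moreover have "card S = d"
    unfolding S_def using B assms
    by (subst card_image) (auto simp: tuple_rank_def intro: inj_on_inv_into)
  moreover have "v ` S = B"
    unfolding S_def by (rule image_inv_into_cancel[OF refl B(1)])
  ultimately show ?thesis
    using B(2) by (intro that[of S]) auto
qed

lemma sum_rank_tuples_le_sum_spanning_subsets:
  fixes g :: "(nat \<Rightarrow> 'a::{finite,field} ^ 'n) \<Rightarrow> real"
  assumes g: "\<And>v. g v \<ge> 0"
  shows "(\<Sum>v\<in>{v \<in> PiE {..<p} (\<lambda>_. UNIV). tuple_rank p v = d}. g v)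
    \<le> (\<Sum>S\<in>{S. S \<subseteq> {..<p} \<and> card S = d}.
          \<Sum>v\<in>{v \<in> PiE {..<p} (\<lambda>_. UNIV). \<forall>j\<in>{..<p}. v j \<in> vec.span (v ` S)}. g v)"
    (is "_ \<le> (\<Sum>S\<in>?Ss. sum g (?A S))")
proof -
  have finite_Ss: "finite ?Ss"
    by (rule finite_subset[of _ "Pow {..<p}"]) auto
  have finite_A: "finite (?A S)" for S
    by (rule finite_subset[of _ "PiE {..<p} (\<lambda>_. UNIV)"]) (auto intro: finite_PiE)
  have finite_Sigma: "finite (SIGMA S:?Ss. ?A S)"
    using finite_Ss finite_A by blast
  have "{v \<in> PiE {..<p} (\<lambda>_. UNIV). tuple_rank p v = d} \<subseteq> snd ` (SIGMA S:?Ss. ?A S)"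
  proof
    fix v :: "nat \<Rightarrow> 'a ^ 'n"
    assume v: "v \<in> {v \<in> PiE {..<p} (\<lambda>_. UNIV). tuple_rank p v = d}"
    then obtain S where "S \<subseteq> {..<p}" "card S = d" "\<forall>j\<in>{..<p}. v j \<in> vec.span (v ` S)"
      using tuple_rank_obtains_spanning_columns by blast
    with v show "v \<in> snd ` (SIGMA S:?Ss. ?A S)"
      by (intro image_eqI[of _ _ "(S, v)"]) auto
  qed
  then have "(\<Sum>v\<in>{v \<in> PiE {..<p} (\<lambda>_. UNIV). tuple_rank p v = d}. g v)
      \<le> (\<Sum>v\<in>snd ` (SIGMA S:?Ss. ?A S). g v)"
    using finite_Sigma by (intro sum_mono2) (auto simp: g)
  also have "\<dots> \<le> (\<Sum>x\<in>(SIGMA S:?Ss. ?A S). g (snd x))"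
    using sum_image_le[OF finite_Sigma, of g snd] by (simp add: g o_def)
  also have "\<dots> = (\<Sum>S\<in>?Ss. sum g (?A S))"
    using finite_Ss finite_A by (subst sum.Sigma) (auto simp: case_prod_unfold)
  finally show ?thesis .
qed

lemma lrnorm_power_of_nat:
  fixes f :: "'a::{finite,field} ^ 'n \<Rightarrow> real"
  assumes f: "\<And>x. f x \<ge> 0" and "r \<ge> 1"
  shows "lrnorm f (real r) ^ r = (\<Sum>x\<in>UNIV. f x ^ r) / real CARD('a) ^ CARD('n)"
proof -
  define Y where "Y = inverse (real CARD('a) ^ CARD('n)) * (\<Sum>x\<in>UNIV. f x ^ r)"
  have "Y \<ge> 0" by (simp add: Y_def f sum_nonneg)
  have "lrnorm f (real r) = Y powr (1 / real r)"
    using \<open>r \<ge> 1\<close> by (simp add: lrnorm_def Y_def f powr_realpow')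
  then have "lrnorm f (real r) ^ r = Y"
    using \<open>r \<ge> 1\<close> \<open>Y \<ge> 0\<close> by (simp add: powr_realpow'[symmetric] powr_powr)
  then show ?thesis by (simp add: Y_def field_simps)
qed

lemma sum_power_mult_sum_power_eq_lrnorm:
  fixes f :: "'a::{finite,field} ^ 'n \<Rightarrow> real"
  assumes f: "\<And>x. f x \<ge> 0" and "d \<ge> 1"
  shows "(\<Sum>x\<in>UNIV. f x) ^ (d - 1) * (\<Sum>x\<in>UNIV. f x ^ (r + 1))
    = real CARD('a) ^ (CARD('n) * d) * lrnorm f 1 ^ (d - 1) * lrnorm f (real (r + 1)) ^ (r + 1)"
proof -
  define Q where "Q = real CARD('a) ^ CARD('n)"
  have "Q > 0" by (simp add: Q_def)
  have L1: "lrnorm f 1 = (\<Sum>x\<in>UNIV. f x) / Q"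
    using lrnorm_power_of_nat[of f 1, OF f] by (simp add: Q_def)
  have Lr: "lrnorm f (real (r + 1)) ^ (r + 1) = (\<Sum>x\<in>UNIV. f x ^ (r + 1)) / Q"
    using lrnorm_power_of_nat[of f "r + 1", OF f] by (simp add: Q_def)
  obtain e where "d = Suc e" using \<open>d \<ge> 1\<close> by (cases d) auto
  then have Qd: "real CARD('a) ^ (CARD('n) * d) = Q * Q ^ (d - 1)"
    by (simp add: Q_def power_add power_mult)
  show ?thesis
    unfolding L1 Lr Qd using \<open>Q > 0\<close> by (simp add: power_divide field_simps)
qed

lemma sum_rank_tuples_prod_le:
  fixes f :: "'a::{finite,field} ^ 'n \<Rightarrow> real"
  assumes f: "\<And>x. f x \<ge> 0" and "1 \<le> d"
  shows "(\<Sum>v \<in> {v \<in> PiE {..<p} (\<lambda>_. UNIV). tuple_rank p v = d}. \<Prod>j<p. f (v j))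
    \<le> real (p choose d) *
       (\<Sum>m = 0..p - d. real ((p - d) choose m) * (real CARD('a) ^ d - 1) ^ (p - d - m) * f 0 ^ m
          * ((\<Sum>x\<in>UNIV. f x) ^ (d - 1) * (\<Sum>x\<in>UNIV. f x ^ (p - d - m + 1))))"
    (is "_ \<le> _ * ?bound")
proof -
  let ?A = "\<lambda>S. {v \<in> PiE {..<p} (\<lambda>_. UNIV). \<forall>j\<in>{..<p}. v j \<in> vec.span (v ` S)}"
  have "(\<Sum>v \<in> {v \<in> PiE {..<p} (\<lambda>_. UNIV). tuple_rank p v = d}. \<Prod>j<p. f (v j))
      \<le> (\<Sum>S\<in>{S. S \<subseteq> {..<p} \<and> card S = d}. \<Sum>v\<in>?A S. \<Prod>j<p. f (v j))"
    by (rule sum_rank_tuples_le_sum_spanning_subsets) (simp add: f prod_nonneg)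
  also have "\<dots> \<le> (\<Sum>S\<in>{S. S \<subseteq> {..<p} \<and> card S = d}. ?bound)"
  proof (rule sum_mono)
    fix S assume S: "S \<in> {S. S \<subseteq> {..<p} \<and> card S = d}"
    then have "finite S" "S \<noteq> {}" using \<open>1 \<le> d\<close> finite_subset by auto
    have "(\<Sum>v\<in>?A S. \<Prod>j<p. f (v j))
        \<le> (\<Sum>u\<in>PiE S (\<lambda>_. UNIV). (\<Prod>i\<in>S. f (u i)) * (\<Sum>w\<in>vec.span (u ` S). f w) ^ (p - d))"
      using sum_PiE_columns_in_span_le[OF f, of "{..<p}" S] S by simp
    also have "\<dots> \<le> ?bound"
      using sum_PiE_prod_mult_sum_span_power_le[OF f \<open>finite S\<close> \<open>S \<noteq> {}\<close>, where k = "p - d"] S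
      by simp
    finally show "(\<Sum>v\<in>?A S. \<Prod>j<p. f (v j)) \<le> ?bound" .
  qed
  also have "\<dots> = real (p choose d) * ?bound"
    by (simp add: n_subsets)
  finally show ?thesis .
qed

theorem lemma3p5:
  fixes f :: "'a::{finite,field} ^ 'n \<Rightarrow> real"
    and p d :: nat
  assumes "p \<ge> 2" and "1 \<le> d" and "d < p"
    and "\<And>x. f x \<ge> 0"
  shows "(\<Sum>v \<in> {v \<in> (PiE {..<p} (\<lambda>_. UNIV)). tuple_rank p v = d}. \<Prod>j<p. f (v j))
     \<le> real (p choose d) *
        (\<Sum>m = 0..p - d. real ((p - d) choose m) * (real CARD('a) ^ d - 1) ^ (p - d - m)
            * real CARD('a) ^ (CARD('n) * d) * f 0 ^ m * lrnorm f 1 ^ (d - 1)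
            * lrnorm f (real (p - d - m + 1)) ^ (p - d - m + 1))"
  \<comment> \<open>the bound holds for every \<open>p\<close> once \<open>d \<ge> 1\<close>\<close>
  using sum_rank_tuples_prod_le[where f = f and p = p, OF assms(4) assms(2)]
  unfolding sum_power_mult_sum_power_eq_lrnorm[where f = f, OF assms(4) assms(2)]
  by (simp only: mult_ac)

end
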